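(* For each $i=1,\dots,n-1$, in the ring of $n\times n$ matrices over $\mathbf{Z}[F_n\rtimes B_n]$, $$(\phi(\sigma_i)+\sigma_i g_i I)(\phi(\sigma_i)-\sigma_i I)=0,$$ where $\sigma_i g_i I$ and $\sigma_i I$ denote the scalar matrices with diagonal entries $\sigma_i g_i$ and $\sigma_i$.
   Context: The braid group $B_n$ ($n\ge2$) has generators $\sigma_1,\dots,\sigma_{n-1}$ with relations $\sigma_i\sigma_j=\sigma_j\sigma_i$ for $|i-j|>1$ and $\sigma_i\sigma_j\sigma_i=\sigma_j\sigma_i\sigma_j$ for $|i-j|=1$. Let $F_n$ be the free group on $g_1,\dots,g_n$. The semidirect product $F_n\rtimes B_n$ is the group generated by $F_n$ and $B_n$ subject to the additional relations $g_{i+1}\sigma_i=\sigma_i g_i$, $g_i\sigma_i=\sigma_i g_i g_{i+1}g_i^{-1}$, and $g_j\sigma_i=\sigma_i g_j$ for $j\notin\{i,i+1\}$. For $i=1,\dots,n-1$ let $R_i=\begin{bmatrix}0&g_i\\1&1-g_i\end{bmatrix}$, and let $\phi$ be the homomorphism from $B_n$ to the invertible $n\times n$ matrices over the group ring $\mathbf{Z}[F_n\rtimes B_n]$ (usual matrix multiplication) given by $\phi(\sigma_i)=\sigma_i\cdot\mathrm{diag}(I_{i-1},R_i,I_{n-i-1})$, where the scalar $\sigma_i$ multiplies every entry on the left. *)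

theory Defs
  imports "Jordan_Normal_Form.Matrix"
begin

text \<open>The generator images of the braid group B_n and the free group F_n in the group ring
  Z[F_n x| B_n] are modelled by elements of an arbitrary ring satisfying the defining relations
  (universal property of the group ring of a presented group).  Matrix indices are 0-based:
  the block R_i sits in rows/columns i-1 and i (i.e. i and i+1 in 1-based numbering).\<close>

definition R_block_mat :: "nat \<Rightarrow> (nat \<Rightarrow> 'r::ring_1) \<Rightarrow> nat \<Rightarrow> 'r mat" where
  "R_block_mat n g i = mat n n (\<lambda>(r, c).
     if r = i - 1 \<and> c = i - 1 then 0
     else if r = i - 1 \<and> c = i then g i
     else if r = i \<and> c = i - 1 then 1
     else if r = i \<and> c = i then 1 - g i
     else if r = c then 1 else 0)"

definition phi_gen :: "nat \<Rightarrow> (nat \<Rightarrow> 'r::ring_1) \<Rightarrow> (nat \<Rightarrow> 'r) \<Rightarrow> nat \<Rightarrow> 'r mat" where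
  "phi_gen n \<sigma> g i = \<sigma> i \<cdot>\<^sub>m R_block_mat n g i"

end

theory Submission
  imports Defs
begin

text \<open>The identity holds in every ring, without the braid and action relations: in
  \<open>\<phi>(\<sigma>\<^sub>i) + \<sigma>\<^sub>i g\<^sub>i I\<close> the columns \<open>i\<close> and \<open>i+1\<close> coincide, while \<open>\<phi>(\<sigma>\<^sub>i) - \<sigma>\<^sub>i I\<close> vanishes
  outside the rows \<open>i\<close> and \<open>i+1\<close>, and these two rows add up to zero.\<close>

lemma mult_eq_zero_if_cols_eq_rows_cancel:
  fixes P Q :: "'a::semiring_0 mat"
  assumes P: "P \<in> carrier_mat m n" and Q: "Q \<in> carrier_mat n p"
    and ab: "a < n" "b < n" "a \<noteq> b"
    and cols_eq: "\<And>r. r < m \<Longrightarrow> P $$ (r, a) = P $$ (r, b)"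
    and rows_zero: "\<And>k c. k < n \<Longrightarrow> k \<noteq> a \<Longrightarrow> k \<noteq> b \<Longrightarrow> c < p \<Longrightarrow> Q $$ (k, c) = 0"
    and rows_cancel: "\<And>c. c < p \<Longrightarrow> Q $$ (a, c) + Q $$ (b, c) = 0"
  shows "P * Q = 0\<^sub>m m p"
proof (rule eq_matI)
  fix r c assume r: "r < dim_row (0\<^sub>m m p :: 'a mat)" and c: "c < dim_col (0\<^sub>m m p :: 'a mat)"
  have "(P * Q) $$ (r, c) = (\<Sum>k\<in>{0..<n}. P $$ (r, k) * Q $$ (k, c))"
    using P Q r c by (simp add: scalar_prod_def)
  also have "\<dots> = (\<Sum>k\<in>{a, b}. P $$ (r, k) * Q $$ (k, c))"
    using ab c rows_zero by (intro sum.mono_neutral_right) auto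
  also have "\<dots> = P $$ (r, a) * (Q $$ (a, c) + Q $$ (b, c))"
    using ab r c cols_eq by (simp add: distrib_left)
  finally show "(P * Q) $$ (r, c) = 0\<^sub>m m p $$ (r, c)"
    using r c rows_cancel by simp
qed (use P Q in auto)

lemma R_block_quadratic_relation:
  fixes s :: "'r::ring_1" and g :: "nat \<Rightarrow> 'r"
  assumes i: "1 \<le> i" "i < n"
  shows "(s \<cdot>\<^sub>m R_block_mat n g i + (s * g i) \<cdot>\<^sub>m 1\<^sub>m n) * (s \<cdot>\<^sub>m R_block_mat n g i - s \<cdot>\<^sub>m 1\<^sub>m n)
         = 0\<^sub>m n n"
proof (rule mult_eq_zero_if_cols_eq_rows_cancel[where a = "i - 1" and b = i])
  show "s \<cdot>\<^sub>m R_block_mat n g i + (s * g i) \<cdot>\<^sub>m 1\<^sub>m n \<in> carrier_mat n n"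
    and "s \<cdot>\<^sub>m R_block_mat n g i - s \<cdot>\<^sub>m 1\<^sub>m n \<in> carrier_mat n n"
    by (auto simp: R_block_mat_def)
  show "i - 1 < n" "i < n" "i - 1 \<noteq> i" using i by auto
  show "(s \<cdot>\<^sub>m R_block_mat n g i + (s * g i) \<cdot>\<^sub>m 1\<^sub>m n) $$ (r, i - 1)
      = (s \<cdot>\<^sub>m R_block_mat n g i + (s * g i) \<cdot>\<^sub>m 1\<^sub>m n) $$ (r, i)" if "r < n" for r
    using i that by (auto simp: R_block_mat_def algebra_simps)
  show "(s \<cdot>\<^sub>m R_block_mat n g i - s \<cdot>\<^sub>m 1\<^sub>m n) $$ (k, c) = 0"
    if "k < n" "k \<noteq> i - 1" "k \<noteq> i" "c < n" for k c
    using that by (auto simp: R_block_mat_def)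
  show "(s \<cdot>\<^sub>m R_block_mat n g i - s \<cdot>\<^sub>m 1\<^sub>m n) $$ (i - 1, c)
      + (s \<cdot>\<^sub>m R_block_mat n g i - s \<cdot>\<^sub>m 1\<^sub>m n) $$ (i, c) = 0" if "c < n" for c
    using i that by (auto simp: R_block_mat_def algebra_simps)
qed

theorem proposition5p1:
  fixes \<sigma> \<sigma>' g g' :: "nat \<Rightarrow> 'r::ring_1" and n i :: nat
  assumes n2: "n \<ge> 2"
    and sigma_unit: "\<forall>k\<in>{1..n-1}. \<sigma> k * \<sigma>' k = 1 \<and> \<sigma>' k * \<sigma> k = 1"
    and g_unit: "\<forall>j\<in>{1..n}. g j * g' j = 1 \<and> g' j * g j = 1"
    and braid_comm: "\<forall>k\<in>{1..n-1}. \<forall>l\<in>{1..n-1}.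
                        (k + 1 < l \<or> l + 1 < k) \<longrightarrow> \<sigma> k * \<sigma> l = \<sigma> l * \<sigma> k"
    and braid_rel: "\<forall>k\<in>{1..n-1}. \<forall>l\<in>{1..n-1}.
                        (l = k + 1 \<or> k = l + 1) \<longrightarrow> \<sigma> k * \<sigma> l * \<sigma> k = \<sigma> l * \<sigma> k * \<sigma> l"
    and act1: "\<forall>k\<in>{1..n-1}. g (k + 1) * \<sigma> k = \<sigma> k * g k"
    and act2: "\<forall>k\<in>{1..n-1}. g k * \<sigma> k = \<sigma> k * g k * g (k + 1) * g' k"
    and act3: "\<forall>k\<in>{1..n-1}. \<forall>j\<in>{1..n}. j \<noteq> k \<and> j \<noteq> k + 1 \<longrightarrow> g j * \<sigma> k = \<sigma> k * g j"
    and i: "i \<in> {1..n-1}"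
  shows "(phi_gen n \<sigma> g i + (\<sigma> i * g i) \<cdot>\<^sub>m 1\<^sub>m n) * (phi_gen n \<sigma> g i - \<sigma> i \<cdot>\<^sub>m 1\<^sub>m n)
         = 0\<^sub>m n n"
proof -
  have "1 \<le> i" "i < n" using i n2 by auto
  then show ?thesis
    unfolding phi_gen_def by (rule R_block_quadratic_relation)
qed

end
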